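(* Let $\mu,\nu$ be partitions of $n$ with $p(\nu)=p(\mu)+k$, where $k\ge2$. Then \[ \sum_{\substack{\mu_1,\dots,\mu_{k-1}\text{ partitions of }n:\\ p(\mu_i)=p(\mu)+i}} t^\mu_{\mu_1}t^{\mu_1}_{\mu_2}\cdots t^{\mu_{k-1}}_\nu=k!\,t^\mu_\nu. \]
   Context: Let $\mathbb H$ be the upper half plane and $\mathcal O(\mathbb H)$ its ring of holomorphic functions. Let $V=\mathbb C[a_{-1},a_{-2},\dots,b_0,b_{-1},\dots]$ be the vacuum module of the Heisenberg Lie algebra $[a_m,b_n]=\delta_{m,-n}C$ (with $a_m1=0$ for $m\ge0$, $b_n1=0$ for $n>0$, $C=1$), a vertex algebra with fields $a(z)=\sum a_nz^{-n-1}$, $b(z)=\sum b_nz^{-n}$. Let $\mathscr D^{ch}(\mathbb H)=V\otimes_{\mathbb C[b_0]}\mathcal O(\mathbb H)$ ($b_0\mapsto\tau$, $b=b_0$), with $Y(f,z)=\sum_{i\ge0}\frac{f^{(i)}(b)}{i!}(\sum_{n\ne0}b_nz^{-n})^i$ for $f\in\mathcal O(\mathbb H)$. For a partition $\mu=(\mu_{(1)}\ge\dots\ge\mu_{(d)}\ge1)$, $p(\mu)=d$, $|\mu|=\sum\mu_{(i)}$ and $b_{-\mu}=b_{-\mu_{(1)}}\cdots b_{-\mu_{(d)}}$. $SL(2,\mathbb R)$ acts on the right by vertex algebra automorphisms $\pi(g)$, integrating the zero modes of $E=-a_{-1}$, $F=a_{-1}b_0^2+2b_{-1}$, $H=-2a_{-1}b_0$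 via $\pi(e^x)=\exp(-x_{(0)})$; for $g=\begin{pmatrix}\alpha&\beta\\\gamma&\delta\end{pmatrix}$, $\pi(g)a_{-1}=a_{-1}(\gamma b+\delta)^2+2\gamma^2b_{-1}$ and $\pi(g)f(b)=f(\frac{\alpha b+\beta}{\gamma b+\delta})$. For each partition $\mu$ there are unique constants $t^\mu_\nu$ (for partitions $\nu$ with $|\nu|=|\mu|$, $p(\nu)\ge p(\mu)$), independent of $g$, such that for all $g\in SL(2,\mathbb R)$ \[ \pi(g)(b_{-\mu}\cdot1)=\sum_{\nu:\,p(\nu)\ge p(\mu)}t^\mu_\nu(-\gamma)^{p(\nu)-p(\mu)}\,b_{-\nu}\,(\gamma b+\delta)^{-p(\mu)-p(\nu)}. \] *)

theory Defs
  imports "HOL-Analysis.Analysis" "HOL-Library.Multiset"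
begin

text \<open>Partitions are multisets of positive naturals; p(mu) = size mu, |mu| = sum_mset mu.
  The monomial b_{-nu} (nu a partition) is indexed by the multiset nu.  An element of the
  commutative subalgebra O(H)[b_{-1},b_{-2},...] of the chiral de Rham complex, evaluated at a
  point tau of H (i.e. b_0 = tau), is represented by its coefficient function
  nat multiset => complex (coefficient of b_{-nu}).\<close>

definition is_partition :: "nat multiset \<Rightarrow> bool" where
  "is_partition mu \<longleftrightarrow> 0 \<notin># mu"

definition upper_half_plane :: "complex set" where
  "upper_half_plane = {tau. Im tau > 0}"

text \<open>Product of polynomials in the commuting variables b_{-1}, b_{-2}, ...\<close>
definition mmul :: "(nat multiset \<Rightarrow> complex) \<Rightarrow> (nat multiset \<Rightarrow> complex) \<Rightarrow> nat multiset \<Rightarrow> complex" where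
  "mmul F G nu = (\<Sum>a\<in>{a. a \<subseteq># nu}. F a * G (nu - a))"

definition mone :: "nat multiset \<Rightarrow> complex" where
  "mone nu = (if nu = {#} then 1 else 0)"

fun mpow :: "(nat multiset \<Rightarrow> complex) \<Rightarrow> nat \<Rightarrow> nat multiset \<Rightarrow> complex" where
  "mpow F 0 = mone"
| "mpow F (Suc i) = mmul F (mpow F i)"

text \<open>X = sum_{n>=1} b_{-n} z^n; the z-degree of a monomial b_{-nu} in a power of X is |nu|.\<close>
definition Xpoly :: "nat multiset \<Rightarrow> complex" where
  "Xpoly nu = (if (\<exists>n. n \<ge> 1 \<and> nu = {#n#}) then 1 else 0)"

definition moeb :: "real \<Rightarrow> real \<Rightarrow> real \<Rightarrow> real \<Rightarrow> complex \<Rightarrow> complex" where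
  "moeb \<alpha> \<beta> \<gamma> \<delta> w = (of_real \<alpha> * w + of_real \<beta>) / (of_real \<gamma> * w + of_real \<delta>)"

text \<open>Coefficient of z^m in Y(f,z)1 = sum_i f^(i)(b)/i! (sum_{n>0} b_{-n} z^n)^i, i.e. the element
  (1/m!) T^m f, at b = tau; for f = moeb g this is pi(g)(b_{-m} 1).\<close>
definition zcoef :: "(complex \<Rightarrow> complex) \<Rightarrow> complex \<Rightarrow> nat \<Rightarrow> nat multiset \<Rightarrow> complex" where
  "zcoef f tau m nu = (if sum_mset nu = m
      then (\<Sum>i\<le>m. (deriv ^^ i) f tau / of_nat (fact i) * mpow Xpoly i nu) else 0)"

text \<open>pi(g)(b_{-mu} 1) = product over the parts m of mu of pi(g)(b_{-m} 1), since pi(g) is a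
  vertex algebra automorphism and b_{-mu}1 is the (-1)-product of the b_{-m}1, evaluated at tau.\<close>
definition pi_bmu :: "real \<Rightarrow> real \<Rightarrow> real \<Rightarrow> real \<Rightarrow> complex \<Rightarrow> nat multiset \<Rightarrow> nat multiset \<Rightarrow> complex" where
  "pi_bmu \<alpha> \<beta> \<gamma> \<delta> tau mu =
     foldr (\<lambda>m acc. mmul (zcoef (moeb \<alpha> \<beta> \<gamma> \<delta>) tau m) acc) (sorted_list_of_multiset mu) mone"

text \<open>t represents the constants t^mu_nu: for all g in SL(2,R) and all tau in H, the coefficient
  of b_{-nu} in pi(g)(b_{-mu}1) equals t^mu_nu (-gamma)^(p(nu)-p(mu)) (gamma tau+delta)^(-p(mu)-p(nu))
  for the partitions nu with |nu| = |mu|, p(nu) >= p(mu), and all other coefficients vanish.\<close>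
definition t_admissible :: "nat multiset \<Rightarrow> nat multiset \<Rightarrow> bool" where
  "t_admissible mu nu \<longleftrightarrow> is_partition nu \<and> sum_mset nu = sum_mset mu \<and> size nu \<ge> size mu"

definition t_rep :: "nat multiset \<Rightarrow> (nat multiset \<Rightarrow> complex) \<Rightarrow> bool" where
  "t_rep mu t \<longleftrightarrow>
     (\<forall>nu. \<not> t_admissible mu nu \<longrightarrow> t nu = 0) \<and>
     (\<forall>\<alpha> \<beta> \<gamma> \<delta> tau. \<alpha> * \<delta> - \<beta> * \<gamma> = 1 \<longrightarrow> tau \<in> upper_half_plane \<longrightarrow>
        (\<forall>nu. pi_bmu \<alpha> \<beta> \<gamma> \<delta> tau mu nu =
           (if t_admissible mu nu
            then t nu * (- of_real \<gamma>) ^ (size nu - size mu)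
                 / (of_real \<gamma> * tau + of_real \<delta>) ^ (size mu + size nu)
            else 0)))"

definition tcoef :: "nat multiset \<Rightarrow> nat multiset \<Rightarrow> complex" where
  "tcoef mu = (THE t. t_rep mu t)"

end

(*
  Write X = sum_n b_{-n} z^n.  Since pi(g)(b_{-m} 1) is the z^m-coefficient of
  sum_i f^(i)(b)/i! X^i for the Moebius map f of g, and
  f^(i)/i! = (-gamma)^(i-1)/(gamma b + delta)^(i+1), the constant t^mu is the product over the
  parts m of mu of the z^m-coefficient G_m of sum_i X^i.

  For p(c) = p(mu) + 1, t^mu_c counts the ways c arises from mu by splitting one part m into
  a + (m - a).  Hence sum_c t^mu_c t^c_nu replaces one factor G_m of t^mu_nu by sum_a G_a G_(m-a),
  which is (N - 1) G_m for the Euler operator N (the degree in the b_{-n}), because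
  (sum_(i>=1) X^i)^2 = sum_p (p - 1) X^p.  By the Leibniz rule for N the result is
  (p(nu) - p(mu)) t^mu_nu, and iterating this one-step identity along a chain of partitions of
  lengths p(mu), p(mu) + 1, ..., p(nu) produces the factor k!.
*)

theory Submission
  imports Defs
begin

section \<open>The algebra of coefficient functions\<close>

lemma finite_subsets_mset: "finite {A. A \<subseteq># M}"
proof (rule finite_subset)
  show "{A. A \<subseteq># M} \<subseteq> (\<Union>n\<le>size M. multisets_of_size (set_mset M) n)"
    by (auto simp: multisets_of_size_def size_mset_mono dest: set_mset_mono mset_subset_eqD)
qed auto

lemma sum_mset_cong: "(\<And>x. x \<in># M \<Longrightarrow> f x = g x) \<Longrightarrow> (\<Sum>x\<in>#M. f x) = (\<Sum>x\<in>#M. g x)"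
  by (metis image_mset_cong)

lemma sum_sum_mset_swap: "(\<Sum>c\<in>P. \<Sum>m\<in>#M. f m c) = (\<Sum>m\<in>#M. \<Sum>c\<in>P. f m c)"
  by (induction M) (auto simp: sum.distrib)

lemma size_mset_diff_split: "b \<subseteq># nu \<Longrightarrow> size nu = size b + size (nu - b)"
  by (metis size_union subset_mset.add_diff_inverse)

lemma mmul_commute: "mmul F G = mmul G F"
proof
  fix nu
  show "mmul F G nu = mmul G F nu"
    unfolding mmul_def
    by (rule sum.reindex_bij_witness[where i="\<lambda>a. nu - a" and j="\<lambda>a. nu - a"])
      (auto simp: subset_mset.diff_diff_right mult.commute)
qed

lemma mmul_mone [simp]: "mmul mone F = F"
proof
  fix nu
  have "mmul mone F nu = (\<Sum>a\<in>{a. a \<subseteq># nu}. if a = {#} then F nu else 0)"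
    unfolding mmul_def mone_def by (rule sum.cong) auto
  then show "mmul mone F nu = F nu"
    using finite_subsets_mset[of nu] by (simp add: sum.delta)
qed

lemma mmul_mone_right [simp]: "mmul F mone = F"
  by (metis mmul_commute mmul_mone)

lemma mmul_assoc: "mmul (mmul F G) H = mmul F (mmul G H)"
proof
  fix nu
  have "mmul (mmul F G) H nu
      = (\<Sum>(d, b)\<in>(SIGMA d:{a. a \<subseteq># nu}. {b. b \<subseteq># d}). F b * G (d - b) * H (nu - d))"
    unfolding mmul_def sum_distrib_right by (rule sum.Sigma) (auto simp: finite_subsets_mset)
  also have "\<dots> = (\<Sum>(b, c)\<in>(SIGMA b:{a. a \<subseteq># nu}. {c. c \<subseteq># nu - b}). F b * G c * H (nu - b - c))"
    by (rule sum.reindex_bij_witness[where i="\<lambda>(b, c). (b + c, b)" and j="\<lambda>(d, b). (b, d - b)"])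
      (auto simp: subset_mset.le_diff_conv2 subset_mset.add_diff_inverse diff_diff_add add.commute)
  also have "\<dots> = mmul F (mmul G H) nu"
    unfolding mmul_def sum_distrib_left mult.assoc
    by (rule sum.Sigma[symmetric]) (auto simp: finite_subsets_mset)
  finally show "mmul (mmul F G) H nu = mmul F (mmul G H) nu" .
qed

lemma mmul_left_commute: "mmul F (mmul G H) = mmul G (mmul F H)"
  by (metis mmul_assoc mmul_commute)

lemma mmul_sum_left: "mmul (\<lambda>x. \<Sum>i\<in>A. F i x) G nu = (\<Sum>i\<in>A. mmul (F i) G nu)"
  unfolding mmul_def by (simp add: sum_distrib_right sum.swap[of _ A])

lemma mmul_sum_right: "mmul F (\<lambda>x. \<Sum>i\<in>A. G i x) nu = (\<Sum>i\<in>A. mmul F (G i) nu)"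
  unfolding mmul_def by (simp add: sum_distrib_left sum.swap[of _ A])

lemma mmul_sum_mset_right: "mmul F (\<lambda>x. \<Sum>i\<in>#M. G i x) nu = (\<Sum>i\<in>#M. mmul F (G i) nu)"
  by (induction M) (simp_all add: mmul_def sum_mset_distrib_left sum.distrib distrib_left)

lemma mmul_cong:
  "(\<And>b. b \<subseteq># nu \<Longrightarrow> F b * G (nu - b) = F' b * G' (nu - b)) \<Longrightarrow> mmul F G nu = mmul F' G' nu"
  unfolding mmul_def by (rule sum.cong) auto

lemma mmul_cong_add:
  "(\<And>b. b \<subseteq># nu \<Longrightarrow> F b * G (nu - b) = F1 b * G1 (nu - b) + F2 b * G2 (nu - b)) \<Longrightarrow>
   mmul F G nu = mmul F1 G1 nu + mmul F2 G2 nu"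
  unfolding mmul_def by (simp add: sum.distrib[symmetric])

lemma mmul_nonzeroE:
  assumes "mmul F G nu \<noteq> 0"
  obtains b where "b \<subseteq># nu" "F b \<noteq> 0" "G (nu - b) \<noteq> 0"
  using assms unfolding mmul_def
  by (metis (mono_tags, lifting) mem_Collect_eq mult_zero_left mult_zero_right sum.neutral)

lemma mpow_add: "mpow F (i + j) = mmul (mpow F i) (mpow F j)"
  by (induction i) (simp_all add: mmul_assoc)

definition mdelta :: "nat multiset \<Rightarrow> nat multiset \<Rightarrow> complex" where
  "mdelta a = (\<lambda>x. if x = a then 1 else 0)"

lemma mdelta_mult: "mdelta a c * x = (if c = a then x else 0)"
  by (simp add: mdelta_def)

lemma mdelta_size_neq: "size a \<noteq> size b \<Longrightarrow> mdelta a b = 0"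
  by (auto simp: mdelta_def)

lemma mmul_mdelta_left: "mmul (mdelta c) F nu = (if c \<subseteq># nu then F (nu - c) else 0)"
proof -
  have "mmul (mdelta c) F nu = (\<Sum>b\<in>{b. b \<subseteq># nu}. if b = c then F (nu - c) else 0)"
    unfolding mmul_def mdelta_def by (rule sum.cong) auto
  then show ?thesis
    using finite_subsets_mset[of nu] by (simp add: sum.delta)
qed

lemma mmul_mdelta: "mmul (mdelta a) (mdelta b) = mdelta (a + b)"
  unfolding fun_eq_iff mmul_mdelta_left by (auto simp: mdelta_def subset_mset.add_diff_inverse)

definition mprod :: "(nat \<Rightarrow> nat multiset \<Rightarrow> complex) \<Rightarrow> nat multiset \<Rightarrow> nat multiset \<Rightarrow> complex" where
  "mprod F mu = foldr (\<lambda>m acc. mmul (F m) acc) (sorted_list_of_multiset mu) mone"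

lemma mprod_empty [simp]: "mprod F {#} = mone"
  by (simp add: mprod_def)

lemma foldr_insort_left_commute:
  assumes "\<And>a b z. f a (f b z) = f b (f a z)"
  shows "foldr f (insort x xs) z = f x (foldr f xs z)"
  by (induction xs) (auto simp: assms)

lemma mprod_add_mset [simp]: "mprod F (add_mset m mu) = mmul (F m) (mprod F mu)"
  unfolding mprod_def
  by (simp add: foldr_insort_left_commute[where f="\<lambda>m acc. mmul (F m) acc"] mmul_left_commute)

definition euler :: "complex \<Rightarrow> (nat multiset \<Rightarrow> complex) \<Rightarrow> nat multiset \<Rightarrow> complex" where
  "euler c F x = (of_nat (size x) - c) * F x"

lemma mmul_euler: "mmul (euler c F) G nu + mmul F (euler d G) nu = euler (c + d) (mmul F G) nu"
  unfolding mmul_def euler_def sum_distrib_left sum.distrib[symmetric]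
proof (rule sum.cong[OF refl])
  fix b assume "b \<in> {b. b \<subseteq># nu}"
  then have "(of_nat (size nu) :: complex) = of_nat (size b) + of_nat (size (nu - b))"
    by (simp add: size_mset_diff_split[of b nu])
  then show "(of_nat (size b) - c) * F b * G (nu - b) + F b * ((of_nat (size (nu - b)) - d) * G (nu - b))
      = (of_nat (size nu) - (c + d)) * (F b * G (nu - b))"
    by (simp add: algebra_simps)
qed

lemma sum_mmul_euler_mprod:
  "(\<Sum>m\<in>#mu. mmul (euler 1 (F m)) (mprod F (mu - {#m#})) nu) = euler (of_nat (size mu)) (mprod F mu) nu"
proof (induction mu arbitrary: nu)
  case empty
  then show ?case by (simp add: euler_def mone_def)
next
  case (add m0 rho)
  have "(\<Sum>m\<in>#rho. mmul (euler 1 (F m)) (mprod F (add_mset m0 rho - {#m#})) nu)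
      = (\<Sum>m\<in>#rho. mmul (F m0) (mmul (euler 1 (F m)) (mprod F (rho - {#m#}))) nu)"
    by (rule sum_mset_cong) (simp add: mmul_left_commute)
  also have "\<dots> = mmul (F m0) (\<lambda>x. \<Sum>m\<in>#rho. mmul (euler 1 (F m)) (mprod F (rho - {#m#})) x) nu"
    by (simp add: mmul_sum_mset_right)
  also have "\<dots> = mmul (F m0) (euler (of_nat (size rho)) (mprod F rho)) nu"
    by (simp add: add.IH)
  finally show ?case
    using mmul_euler[of 1 "F m0" "mprod F rho" nu "of_nat (size rho)"] by (simp add: add.commute)
qed

section \<open>Partitions\<close>

lemma is_partition_add_mset [simp]: "is_partition (add_mset m mu) \<longleftrightarrow> m \<ge> 1 \<and> is_partition mu"
  by (cases m) (auto simp: is_partition_def)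

lemma is_partition_memberD: "is_partition mu \<Longrightarrow> m \<in># mu \<Longrightarrow> m \<ge> 1"
  by (cases m) (auto simp: is_partition_def)

lemma partition_size_le_sum: "is_partition c \<Longrightarrow> size c \<le> sum_mset c"
  by (induction c) auto

lemma finite_partitions_of_sum: "finite {c. is_partition c \<and> sum_mset c = n}"
proof (rule finite_subset)
  have "set_mset c \<subseteq> {1..sum_mset c}" if "is_partition c" for c
    using that by (induction c) auto
  then show "{c. is_partition c \<and> sum_mset c = n} \<subseteq> (\<Union>s\<le>n. multisets_of_size {1..n} s)"
    by (fastforce simp: multisets_of_size_def partition_size_le_sum)
qed auto

definition partitions :: "nat \<Rightarrow> nat \<Rightarrow> nat multiset set" where
  "partitions n s = {c. is_partition c \<and> sum_mset c = n \<and> size c = s}"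

lemma finite_partitions: "finite (partitions n s)"
  by (rule finite_subset[OF _ finite_partitions_of_sum[of n]]) (auto simp: partitions_def)

definition split_part :: "nat multiset \<Rightarrow> nat \<Rightarrow> nat \<Rightarrow> nat multiset" where
  "split_part mu m a = add_mset a (add_mset (m - a) (mu - {#m#}))"

lemma split_part_in_partitions:
  assumes "is_partition mu" "m \<in># mu" "a \<in> {1..<m}"
  shows "split_part mu m a \<in> partitions (sum_mset mu) (Suc (size mu))"
proof -
  obtain rho where "mu = add_mset m rho"
    using assms(2) by (metis multi_member_split)
  with assms show ?thesis
    by (auto simp: partitions_def split_part_def is_partition_def)
qed

lemma mprod_split_part:
  "m \<in># mu \<Longrightarrow> mprod F (split_part mu m a) = mmul (mmul (F a) (F (m - a))) (mprod F (mu - {#m#}))"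
  by (simp add: split_part_def mmul_assoc)

section \<open>The geometric series in X\<close>

lemma mpow_Xpoly_nonzeroD: "mpow Xpoly i a \<noteq> 0 \<Longrightarrow> size a = i \<and> 0 \<notin># a"
proof (induction i arbitrary: a)
  case 0
  then show ?case by (auto simp: mone_def split: if_splits)
next
  case (Suc i)
  then obtain b where b: "b \<subseteq># a" "Xpoly b \<noteq> 0" "mpow Xpoly i (a - b) \<noteq> 0"
    by (auto elim: mmul_nonzeroE)
  then obtain n where n: "n \<ge> 1" "b = {#n#}"
    by (auto simp: Xpoly_def split: if_splits)
  then have "a = add_mset n (a - b)"
    using b(1) by (simp add: insert_DiffM)
  with n Suc.IH[OF b(3)] show ?case
    by (metis not_one_le_zero set_mset_add_mset_insert insert_iff size_add_mset)
qed

(* The coefficients of sum_i X^i: the monomial b_{-a} only occurs in X^(size a). *)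
definition geom_series :: "nat multiset \<Rightarrow> complex" where
  "geom_series a = mpow Xpoly (size a) a"

lemma mpow_Xpoly_eq: "mpow Xpoly i a = (if size a = i then geom_series a else 0)"
  using mpow_Xpoly_nonzeroD by (auto simp: geom_series_def)

lemma geom_series_nonzeroD: "geom_series a \<noteq> 0 \<Longrightarrow> 0 \<notin># a"
  using mpow_Xpoly_nonzeroD by (auto simp: geom_series_def)

definition geom_coeff :: "nat \<Rightarrow> nat multiset \<Rightarrow> complex" where
  "geom_coeff m a = (if sum_mset a = m then geom_series a else 0)"

lemma geom_coeff_nonzeroD:
  "geom_coeff m a \<noteq> 0 \<Longrightarrow> m \<ge> 1 \<Longrightarrow> sum_mset a = m \<and> 0 \<notin># a \<and> size a \<ge> 1"
  unfolding geom_coeff_def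
  by (auto split: if_splits dest: geom_series_nonzeroD simp: Suc_le_eq nonempty_has_size[symmetric])

lemma mprod_geom_coeff_nonzeroD:
  "is_partition mu \<Longrightarrow> mprod geom_coeff mu nu \<noteq> 0 \<Longrightarrow> t_admissible mu nu"
proof (induction mu arbitrary: nu)
  case empty
  then show ?case by (auto simp: mone_def t_admissible_def is_partition_def split: if_splits)
next
  case (add m rho)
  then have m: "m \<ge> 1" and rho: "is_partition rho"
    by simp_all
  from add.prems(2) obtain b where b: "b \<subseteq># nu" "geom_coeff m b \<noteq> 0" "mprod geom_coeff rho (nu - b) \<noteq> 0"
    by (auto elim: mmul_nonzeroE)
  have nu: "nu = b + (nu - b)"
    using b(1) by (simp add: subset_mset.add_diff_inverse)
  from geom_coeff_nonzeroD[OF b(2) m] add.IH[OF rho b(3)] show ?case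
    by (subst nu) (auto simp: t_admissible_def is_partition_def)
qed

lemma mprod_geom_coeff_size_less:
  "is_partition mu \<Longrightarrow> size nu < size mu \<Longrightarrow> mprod geom_coeff mu nu = 0"
  using mprod_geom_coeff_nonzeroD by (fastforce simp: t_admissible_def)

lemma geom_coeff_size_le_1: "m \<ge> 1 \<Longrightarrow> size b \<le> 1 \<Longrightarrow> geom_coeff m b = mdelta {#m#} b"
proof (cases b)
  case (add x b')
  assume "m \<ge> 1" "size b \<le> 1"
  with add have "b = {#x#}"
    by simp
  with \<open>m \<ge> 1\<close> show ?thesis
    by (simp add: geom_coeff_def geom_series_def mdelta_def Xpoly_def)
qed (auto simp: geom_coeff_def mdelta_def)

lemma sum_geom_coeff_products:
  assumes b: "b \<subseteq># al"
  shows "(\<Sum>a\<in>{1..<m}. geom_coeff a b * geom_coeff (m - a) (al - b))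
    = (if sum_mset al = m \<and> b \<noteq> {#} \<and> al - b \<noteq> {#} then geom_series b * geom_series (al - b) else 0)"
proof -
  have sum_al: "sum_mset al = sum_mset b + sum_mset (al - b)"
    using b by (metis subset_mset.add_diff_inverse sum_mset.union)
  have "(\<Sum>a\<in>{1..<m}. geom_coeff a b * geom_coeff (m - a) (al - b))
      = (\<Sum>a\<in>{1..<m}. if sum_mset b = a then
          (if sum_mset (al - b) = m - sum_mset b then geom_series b * geom_series (al - b) else 0) else 0)"
    unfolding geom_coeff_def by (rule sum.cong) auto
  also have "\<dots> = (if sum_mset b \<in> {1..<m} \<and> sum_mset (al - b) = m - sum_mset b
      then geom_series b * geom_series (al - b) else 0)"
    by (simp add: sum.delta)
  also have "\<dots> = (if sum_mset al = m \<and> b \<noteq> {#} \<and> al - b \<noteq> {#}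
      then geom_series b * geom_series (al - b) else 0)"
  proof (cases "geom_series b * geom_series (al - b) = 0")
    case False
    then have "0 \<notin># b" "0 \<notin># al - b"
      using geom_series_nonzeroD by auto
    then have "sum_mset b = 0 \<longleftrightarrow> b = {#}" "sum_mset (al - b) = 0 \<longleftrightarrow> al - b = {#}"
      by (auto, metis multiset_nonemptyE)+
    then have "sum_mset b \<in> {1..<m} \<and> sum_mset (al - b) = m - sum_mset b
        \<longleftrightarrow> sum_mset al = m \<and> b \<noteq> {#} \<and> al - b \<noteq> {#}"
      unfolding sum_al by (auto simp del: sum_mset_0_iff)
    then show ?thesis
      by (simp only:)
  qed simp
  finally show ?thesis .
qed

lemma sum_mpow_Xpoly_products:
  assumes b: "b \<subseteq># al"
  shows "(\<Sum>i\<in>{1..<size al}. mpow Xpoly i b * mpow Xpoly (size al - i) (al - b))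
    = (if b \<noteq> {#} \<and> al - b \<noteq> {#} then geom_series b * geom_series (al - b) else 0)"
proof -
  have size_al: "size al = size b + size (al - b)"
    using b by (rule size_mset_diff_split)
  have "(\<Sum>i\<in>{1..<size al}. mpow Xpoly i b * mpow Xpoly (size al - i) (al - b))
      = (\<Sum>i\<in>{1..<size al}. if size b = i then geom_series b * geom_series (al - b) else 0)"
    unfolding mpow_Xpoly_eq using size_al by (intro sum.cong) auto
  also have "\<dots> = (if size b \<in> {1..<size al} then geom_series b * geom_series (al - b) else 0)"
    by (simp add: sum.delta)
  also have "size b \<in> {1..<size al} \<longleftrightarrow> b \<noteq> {#} \<and> al - b \<noteq> {#}"
    unfolding atLeastLessThan_iff size_eq_0_iff_empty[symmetric] using size_al by arith
  finally show ?thesis .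
qed

lemma geom_coeff_convolution:
  assumes m: "m \<ge> 1"
  shows "(\<Sum>a\<in>{1..<m}. mmul (geom_coeff a) (geom_coeff (m - a)) al) = (of_nat (size al) - 1) * geom_coeff m al"
proof -
  let ?S = "\<lambda>b. if sum_mset al = m \<and> b \<noteq> {#} \<and> al - b \<noteq> {#} then geom_series b * geom_series (al - b) else 0"
  have "(\<Sum>a\<in>{1..<m}. mmul (geom_coeff a) (geom_coeff (m - a)) al)
      = (\<Sum>b\<in>{b. b \<subseteq># al}. \<Sum>a\<in>{1..<m}. geom_coeff a b * geom_coeff (m - a) (al - b))"
    unfolding mmul_def by (rule sum.swap)
  also have "\<dots> = (\<Sum>b\<in>{b. b \<subseteq># al}. ?S b)"
    by (rule sum.cong[OF refl], rule sum_geom_coeff_products) simp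
  also have "\<dots> = (\<Sum>b\<in>{b. b \<subseteq># al}. if sum_mset al = m
      then \<Sum>i\<in>{1..<size al}. mpow Xpoly i b * mpow Xpoly (size al - i) (al - b) else 0)"
    by (rule sum.cong[OF refl]) (subst sum_mpow_Xpoly_products; auto)
  also have "\<dots> = (if sum_mset al = m
      then \<Sum>i\<in>{1..<size al}. mmul (mpow Xpoly i) (mpow Xpoly (size al - i)) al else 0)"
    unfolding mmul_def by (auto intro: sum.swap)
  also have "\<dots> = (of_nat (size al) - 1) * geom_coeff m al"
  proof (cases "sum_mset al = m")
    case True
    then have "size al \<ge> 1"
      using m by (cases al) auto
    then have "(\<Sum>i\<in>{1..<size al}. mmul (mpow Xpoly i) (mpow Xpoly (size al - i)) al)
        = of_nat (size al - 1) * mpow Xpoly (size al) al"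
      by (simp flip: mpow_add)
    with True \<open>size al \<ge> 1\<close> show ?thesis
      by (simp add: geom_coeff_def geom_series_def of_nat_diff)
  qed (simp add: geom_coeff_def)
  finally show ?thesis .
qed

lemma mmul_geom_coeff_size_2:
  assumes a: "a \<ge> 1" and c: "c \<ge> 1" and nu: "size nu = 2"
  shows "mmul (geom_coeff a) (geom_coeff c) nu = mdelta {#a, c#} nu"
proof -
  have "mmul (geom_coeff a) (geom_coeff c) nu = mmul (mdelta {#a#}) (mdelta {#c#}) nu"
  proof (rule mmul_cong)
    fix b assume "b \<subseteq># nu"
    then have "size b + size (nu - b) = 2"
      using nu size_mset_diff_split by metis
    then consider "size b \<le> 1" "size (nu - b) \<le> 1" | "size b = 0" | "size (nu - b) = 0"
      by linarith
    then show "geom_coeff a b * geom_coeff c (nu - b) = mdelta {#a#} b * mdelta {#c#} (nu - b)"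
      using a c by cases (auto simp: geom_coeff_size_le_1 mdelta_def)
  qed
  then show ?thesis
    by (simp add: mmul_mdelta add_mset_commute)
qed

lemma geom_coeff_size_2:
  assumes m: "m \<ge> 1" and nu: "size nu = 2"
  shows "geom_coeff m nu = (\<Sum>a\<in>{1..<m}. mdelta {#a, m - a#} nu)"
proof -
  have "geom_coeff m nu = (of_nat (size nu) - 1) * geom_coeff m nu"
    using nu by simp
  also have "\<dots> = (\<Sum>a\<in>{1..<m}. mmul (geom_coeff a) (geom_coeff (m - a)) nu)"
    by (rule geom_coeff_convolution[OF m, symmetric])
  also have "\<dots> = (\<Sum>a\<in>{1..<m}. mdelta {#a, m - a#} nu)"
    using nu by (intro sum.cong refl mmul_geom_coeff_size_2) auto
  finally show ?thesis .
qed

lemma mprod_geom_coeff_same_size: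
  "is_partition mu \<Longrightarrow> size nu = size mu \<Longrightarrow> mprod geom_coeff mu nu = mdelta mu nu"
proof (induction mu arbitrary: nu)
  case empty
  then show ?case by (simp add: mone_def mdelta_def)
next
  case (add m rho)
  then have m: "m \<ge> 1" and rho: "is_partition rho"
    by simp_all
  have "mprod geom_coeff (add_mset m rho) nu = mmul (mdelta {#m#}) (mdelta rho) nu"
    unfolding mprod_add_mset
  proof (rule mmul_cong)
    fix b assume "b \<subseteq># nu"
    then consider "size b \<le> 1" "size (nu - b) = size rho" | "size b = 0" | "size (nu - b) < size rho"
      using add.prems(2) size_mset_diff_split[OF \<open>b \<subseteq># nu\<close>] unfolding size_add_mset by linarith
    then show "geom_coeff m b * mprod geom_coeff rho (nu - b) = mdelta {#m#} b * mdelta rho (nu - b)"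
      using m by cases (auto simp: geom_coeff_size_le_1 add.IH[OF rho] mprod_geom_coeff_size_less[OF rho]
        mdelta_def)
  qed
  then show ?case
    by (simp add: mmul_mdelta)
qed

lemma mprod_geom_coeff_size_Suc:
  "is_partition mu \<Longrightarrow> size nu = Suc (size mu) \<Longrightarrow>
    mprod geom_coeff mu nu = (\<Sum>m\<in>#mu. \<Sum>a\<in>{1..<m}. mdelta (split_part mu m a) nu)"
proof (induction mu arbitrary: nu)
  case empty
  then show ?case by (auto simp: mone_def)
next
  case (add m rho)
  then have m: "m \<ge> 1" and rho: "is_partition rho"
    by simp_all
  let ?D = "\<lambda>x. \<Sum>m'\<in>#rho. \<Sum>a\<in>{1..<m'}. mdelta (split_part rho m' a) x"
  have "mprod geom_coeff (add_mset m rho) nu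
      = mmul (mdelta {#m#}) ?D nu + mmul (\<lambda>b. \<Sum>a\<in>{1..<m}. mdelta {#a, m - a#} b) (mdelta rho) nu"
    unfolding mprod_add_mset
  proof (rule mmul_cong_add)
    fix b assume "b \<subseteq># nu"
    then have sizes: "size b + size (nu - b) = Suc (Suc (size rho))"
      using add.prems(2) size_mset_diff_split by fastforce
    then consider "size b = 0" | "size b = 1" "size (nu - b) = Suc (size rho)"
      | "size b = 2" "size (nu - b) = size rho" | "size (nu - b) < size rho"
      by linarith
    then show "geom_coeff m b * mprod geom_coeff rho (nu - b)
        = mdelta {#m#} b * ?D (nu - b) + (\<Sum>a\<in>{1..<m}. mdelta {#a, m - a#} b) * mdelta rho (nu - b)"
    proof cases
      case 1
      with m show ?thesis by (simp add: geom_coeff_size_le_1 mdelta_def)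
    next
      case 2
      with m show ?thesis by (simp add: geom_coeff_size_le_1 add.IH[OF rho] mdelta_size_neq)
    next
      case 3
      with m show ?thesis
        by (simp add: geom_coeff_size_2 mprod_geom_coeff_same_size[OF rho] mdelta_size_neq sum_distrib_right)
    next
      case 4
      with sizes show ?thesis
        by (simp add: mprod_geom_coeff_size_less[OF rho] mdelta_size_neq)
    qed
  qed
  also have "\<dots> = (\<Sum>m'\<in>#rho. \<Sum>a\<in>{1..<m'}. mdelta (split_part (add_mset m rho) m' a) nu)
      + (\<Sum>a\<in>{1..<m}. mdelta (split_part (add_mset m rho) m a) nu)"
    by (simp add: mmul_sum_mset_right mmul_sum_right mmul_sum_left mmul_mdelta split_part_def
      cong: sum_mset_cong)
  finally show ?case
    by simp
qed

lemma sum_partitions_mprod_geom_coeff: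
  assumes mu: "is_partition mu"
  shows "(\<Sum>c\<in>partitions (sum_mset mu) (Suc (size mu)). mprod geom_coeff mu c * mprod geom_coeff c nu)
    = (of_nat (size nu) - of_nat (size mu)) * mprod geom_coeff mu nu"
proof -
  let ?P = "partitions (sum_mset mu) (Suc (size mu))"
  have "(\<Sum>c\<in>?P. mprod geom_coeff mu c * mprod geom_coeff c nu)
      = (\<Sum>c\<in>?P. \<Sum>m\<in>#mu. \<Sum>a\<in>{1..<m}. mdelta (split_part mu m a) c * mprod geom_coeff c nu)"
    by (rule sum.cong[OF refl]) (simp add: mprod_geom_coeff_size_Suc[OF mu] partitions_def
      sum_distrib_right sum_mset_distrib_right)
  also have "\<dots> = (\<Sum>m\<in>#mu. \<Sum>a\<in>{1..<m}. \<Sum>c\<in>?P. mdelta (split_part mu m a) c * mprod geom_coeff c nu)"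
    by (simp only: sum_sum_mset_swap sum.swap[of _ ?P])
  also have "\<dots> = (\<Sum>m\<in>#mu. \<Sum>a\<in>{1..<m}. mprod geom_coeff (split_part mu m a) nu)"
    using split_part_in_partitions[OF mu] finite_partitions
    by (intro sum_mset_cong sum.cong refl) (simp add: mdelta_mult sum.delta')
  also have "\<dots> = (\<Sum>m\<in>#mu. mmul (euler 1 (geom_coeff m)) (mprod geom_coeff (mu - {#m#})) nu)"
  proof (rule sum_mset_cong)
    fix m assume m: "m \<in># mu"
    then have "(\<Sum>a\<in>{1..<m}. mprod geom_coeff (split_part mu m a) nu)
        = mmul (\<lambda>x. \<Sum>a\<in>{1..<m}. mmul (geom_coeff a) (geom_coeff (m - a)) x) (mprod geom_coeff (mu - {#m#})) nu"
      by (simp only: mprod_split_part mmul_sum_left)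
    also have "(\<lambda>x. \<Sum>a\<in>{1..<m}. mmul (geom_coeff a) (geom_coeff (m - a)) x) = euler 1 (geom_coeff m)"
      unfolding euler_def using is_partition_memberD[OF mu m] by (intro ext geom_coeff_convolution)
    finally show "(\<Sum>a\<in>{1..<m}. mprod geom_coeff (split_part mu m a) nu)
        = mmul (euler 1 (geom_coeff m)) (mprod geom_coeff (mu - {#m#})) nu" .
  qed
  also have "\<dots> = (of_nat (size nu) - of_nat (size mu)) * mprod geom_coeff mu nu"
    by (simp add: sum_mmul_euler_mprod euler_def)
  finally show ?thesis .
qed

section \<open>The constants t^mu_nu\<close>

lemma has_field_derivative_divide_power:
  fixes g d K :: complex
  assumes "g * w + d \<noteq> 0"
  shows "((\<lambda>w. K / (g * w + d) ^ Suc n) has_field_derivative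
           - K * of_nat (Suc n) * g / (g * w + d) ^ Suc (Suc n)) (at w)"
proof -
  define c where "c = g * w + d"
  have "((\<lambda>w. K * inverse (g * w + d) ^ Suc n) has_field_derivative
      K * (of_nat (Suc n) * inverse c ^ n * (- (inverse c ^ 2) * g))) (at w)"
    unfolding c_def using assms by (intro derivative_eq_intros refl) (auto simp: power2_eq_square)
  moreover have "K * (of_nat (Suc n) * inverse c ^ n * (- (inverse c ^ 2) * g))
      = - K * of_nat (Suc n) * g / c ^ Suc (Suc n)"
    using assms unfolding c_def[symmetric] by (simp add: field_simps power2_eq_square)
  moreover have "(\<lambda>w. K * inverse (g * w + d) ^ Suc n) = (\<lambda>w. K / (g * w + d) ^ Suc n)"
    by (simp add: divide_inverse power_inverse)
  ultimately show ?thesis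
    unfolding c_def by (simp only:)
qed

lemma moeb_has_field_derivative:
  assumes det: "\<alpha> * \<delta> - \<beta> * \<gamma> = 1" and c: "of_real \<gamma> * w + of_real \<delta> \<noteq> (0::complex)"
  shows "(moeb \<alpha> \<beta> \<gamma> \<delta> has_field_derivative 1 / (of_real \<gamma> * w + of_real \<delta>) ^ 2) (at w)"
proof -
  have "of_real \<alpha> * of_real \<delta> - of_real \<beta> * of_real \<gamma> = (1::complex)"
    by (metis det of_real_1 of_real_diff of_real_mult)
  then show ?thesis
    unfolding moeb_def using c
    by (auto intro!: derivative_eq_intros simp: power2_eq_square algebra_simps)
qed

lemma higher_deriv_moeb:
  assumes det: "\<alpha> * \<delta> - \<beta> * \<gamma> = 1"
  shows "of_real \<gamma> * w + of_real \<delta> \<noteq> (0::complex) \<Longrightarrow>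
    (deriv ^^ Suc j) (moeb \<alpha> \<beta> \<gamma> \<delta>) w
      = fact (Suc j) * (- of_real \<gamma>) ^ j / (of_real \<gamma> * w + of_real \<delta>) ^ Suc (Suc j)"
proof (induction j arbitrary: w)
  case 0
  then show ?case
    using DERIV_imp_deriv[OF moeb_has_field_derivative[OF det]] by (simp add: power2_eq_square)
next
  case (Suc j)
  let ?K = "fact (Suc j) * (- of_real \<gamma>) ^ j :: complex"
  have "\<forall>\<^sub>F x in nhds w. of_real \<gamma> * x + of_real \<delta> \<noteq> (0::complex)"
    using Suc.prems by (intro eventually_nhds_in_open[of "{x. _ x \<noteq> 0}", simplified]
      open_Collect_neq continuous_intros) auto
  then have "\<forall>\<^sub>F x in nhds w.
      (deriv ^^ Suc j) (moeb \<alpha> \<beta> \<gamma> \<delta>) x = ?K / (of_real \<gamma> * x + of_real \<delta>) ^ Suc (Suc j)"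
    by eventually_elim (use Suc.IH in auto)
  then have "(deriv ^^ Suc (Suc j)) (moeb \<alpha> \<beta> \<gamma> \<delta>) w
      = deriv (\<lambda>x. ?K / (of_real \<gamma> * x + of_real \<delta>) ^ Suc (Suc j)) w"
    by (simp add: deriv_cong_ev)
  also have "\<dots> = - ?K * of_nat (Suc (Suc j)) * of_real \<gamma> / (of_real \<gamma> * w + of_real \<delta>) ^ Suc (Suc (Suc j))"
    using Suc.prems by (intro DERIV_imp_deriv has_field_derivative_divide_power)
  finally show ?case
    by (simp add: algebra_simps)
qed

lemma zcoef_moeb:
  assumes det: "\<alpha> * \<delta> - \<beta> * \<gamma> = 1" and c: "of_real \<gamma> * tau + of_real \<delta> \<noteq> (0::complex)"
    and m: "m \<ge> 1"
  shows "zcoef (moeb \<alpha> \<beta> \<gamma> \<delta>) tau m nu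
    = geom_coeff m nu * (- of_real \<gamma>) ^ (size nu - 1) / (of_real \<gamma> * tau + of_real \<delta>) ^ (1 + size nu)"
proof (cases "sum_mset nu = m \<and> mpow Xpoly (size nu) nu \<noteq> 0")
  case False
  then have "mpow Xpoly i nu = 0" if "sum_mset nu = m" for i
    using that mpow_Xpoly_nonzeroD by blast
  with False show ?thesis
    by (simp add: zcoef_def geom_coeff_def geom_series_def)
next
  case True
  then have nu: "0 \<notin># nu" "nu \<noteq> {#}"
    using m mpow_Xpoly_nonzeroD by auto
  then obtain j where j: "size nu = Suc j"
    by (cases "size nu") auto
  have "size nu \<le> m"
    using partition_size_le_sum[of nu] nu True by (simp add: is_partition_def)
  have "zcoef (moeb \<alpha> \<beta> \<gamma> \<delta>) tau m nu
      = (\<Sum>i\<le>m. (deriv ^^ i) (moeb \<alpha> \<beta> \<gamma> \<delta>) tau / of_nat (fact i) * mpow Xpoly i nu)"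
    using True by (simp add: zcoef_def)
  also have "\<dots> = (\<Sum>i\<le>m. if i = size nu
      then (deriv ^^ i) (moeb \<alpha> \<beta> \<gamma> \<delta>) tau / of_nat (fact i) * mpow Xpoly i nu else 0)"
    using mpow_Xpoly_nonzeroD by (intro sum.cong) auto
  also have "\<dots> = (deriv ^^ Suc j) (moeb \<alpha> \<beta> \<gamma> \<delta>) tau / of_nat (fact (Suc j)) * mpow Xpoly (size nu) nu"
    using \<open>size nu \<le> m\<close> j by simp
  finally show ?thesis
    using True unfolding j geom_coeff_def geom_series_def higher_deriv_moeb[OF det c]
    by (simp del: fact_Suc)
qed

lemma mmul_size_weight:
  assumes F: "\<And>b. F b \<noteq> 0 \<Longrightarrow> p \<le> size b" and G: "\<And>b. G b \<noteq> 0 \<Longrightarrow> q \<le> size b"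
  shows "mmul (\<lambda>b. F b * u ^ (size b - p) / c ^ (p + size b)) (\<lambda>b. G b * u ^ (size b - q) / c ^ (q + size b)) nu
       = mmul F G nu * u ^ (size nu - (p + q)) / c ^ (p + q + size nu)"
  unfolding mmul_def sum_divide_distrib sum_distrib_right
proof (rule sum.cong[OF refl])
  fix b assume "b \<in> {b. b \<subseteq># nu}"
  then have size_nu: "size nu = size b + size (nu - b)"
    by (simp add: size_mset_diff_split)
  show "F b * u ^ (size b - p) / c ^ (p + size b) * (G (nu - b) * u ^ (size (nu - b) - q) / c ^ (q + size (nu - b)))
      = F b * G (nu - b) * u ^ (size nu - (p + q)) / c ^ (p + q + size nu)"
  proof (cases "F b = 0 \<or> G (nu - b) = 0")
    case False
    then have "size nu - (p + q) = (size b - p) + (size (nu - b) - q)"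
      using F G size_nu by fastforce
    moreover have "p + q + size nu = (p + size b) + (q + size (nu - b))"
      using size_nu by simp
    ultimately show ?thesis
      by (simp only: power_add) (simp add: algebra_simps)
  qed auto
qed

lemma pi_bmu_eq_mprod: "pi_bmu \<alpha> \<beta> \<gamma> \<delta> tau = mprod (zcoef (moeb \<alpha> \<beta> \<gamma> \<delta>) tau)"
  by (simp add: fun_eq_iff pi_bmu_def mprod_def)

lemma pi_bmu_eq:
  assumes det: "\<alpha> * \<delta> - \<beta> * \<gamma> = 1" and c: "of_real \<gamma> * tau + of_real \<delta> \<noteq> (0::complex)"
  shows "is_partition mu \<Longrightarrow> pi_bmu \<alpha> \<beta> \<gamma> \<delta> tau mu nu = mprod geom_coeff mu nu
      * (- of_real \<gamma>) ^ (size nu - size mu) / (of_real \<gamma> * tau + of_real \<delta>) ^ (size mu + size nu)"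
proof (induction mu arbitrary: nu)
  case empty
  then show ?case by (simp add: pi_bmu_eq_mprod mone_def)
next
  case (add m rho)
  then have m: "m \<ge> 1" and rho: "is_partition rho"
    by simp_all
  let ?u = "- of_real \<gamma> :: complex" and ?c = "of_real \<gamma> * tau + of_real \<delta> :: complex"
  have "zcoef (moeb \<alpha> \<beta> \<gamma> \<delta>) tau m = (\<lambda>b. geom_coeff m b * ?u ^ (size b - 1) / ?c ^ (1 + size b))"
    by (rule ext) (rule zcoef_moeb[OF det c m])
  moreover have "pi_bmu \<alpha> \<beta> \<gamma> \<delta> tau rho
      = (\<lambda>b. mprod geom_coeff rho b * ?u ^ (size b - size rho) / ?c ^ (size rho + size b))"
    by (rule ext) (rule add.IH[OF rho])
  ultimately have "pi_bmu \<alpha> \<beta> \<gamma> \<delta> tau (add_mset m rho) nu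
      = mmul (\<lambda>b. geom_coeff m b * ?u ^ (size b - 1) / ?c ^ (1 + size b))
          (\<lambda>b. mprod geom_coeff rho b * ?u ^ (size b - size rho) / ?c ^ (size rho + size b)) nu"
    by (simp only: pi_bmu_eq_mprod mprod_add_mset)
  also have "\<dots> = mprod geom_coeff (add_mset m rho) nu
      * ?u ^ (size nu - size (add_mset m rho)) / ?c ^ (size (add_mset m rho) + size nu)"
    using geom_coeff_nonzeroD[OF _ m] mprod_geom_coeff_nonzeroD[OF rho]
    by (subst mmul_size_weight) (auto simp: t_admissible_def)
  finally show ?case .
qed

lemma moeb_denom_nonzero:
  assumes det: "\<alpha> * \<delta> - \<beta> * \<gamma> = 1" and tau: "tau \<in> upper_half_plane"
  shows "of_real \<gamma> * tau + of_real \<delta> \<noteq> (0::complex)"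
proof
  assume denom: "of_real \<gamma> * tau + of_real \<delta> = (0::complex)"
  have "Im (of_real \<gamma> * tau + of_real \<delta>) = 0" "Re (of_real \<gamma> * tau + of_real \<delta>) = 0"
    by (simp_all only: denom zero_complex.sel)
  then have "\<gamma> * Im tau = 0" "\<gamma> * Re tau + \<delta> = 0"
    by simp_all
  with det tau show False
    by (auto simp: upper_half_plane_def)
qed

lemma t_rep_mprod_geom_coeff:
  assumes mu: "is_partition mu"
  shows "t_rep mu (mprod geom_coeff mu)"
  unfolding t_rep_def
  using mprod_geom_coeff_nonzeroD[OF mu] pi_bmu_eq[OF _ moeb_denom_nonzero mu]
  by (auto simp: add.commute)

lemma t_rep_unique:
  assumes "t_rep mu t" "t_rep mu t'"
  shows "t = t'"
proof
  fix nu
  show "t nu = t' nu"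
  proof (cases "t_admissible mu nu")
    case False
    with assms show ?thesis by (simp add: t_rep_def)
  next
    case True
    have "\<i> \<in> upper_half_plane"
      by (simp add: upper_half_plane_def)
    then have "pi_bmu 1 0 (-1) 1 \<i> mu nu = s nu / (1 - \<i>) ^ (size mu + size nu)" if "t_rep mu s" for s
      using that True unfolding t_rep_def by simp
    moreover have "1 - \<i> \<noteq> 0"
      by (simp add: complex_eq_iff)
    ultimately show ?thesis
      using assms by (metis divide_cancel_right power_eq_0_iff)
  qed
qed

lemma tcoef_eq_mprod: "is_partition mu \<Longrightarrow> tcoef mu = mprod geom_coeff mu"
  unfolding tcoef_def using t_rep_mprod_geom_coeff t_rep_unique by (metis the_equality)

lemma sum_partitions_tcoef:
  assumes mu: "is_partition mu"
  shows "(\<Sum>c\<in>partitions (sum_mset mu) (Suc (size mu)). tcoef mu c * tcoef c nu)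
    = (of_nat (size nu) - of_nat (size mu)) * tcoef mu nu"
proof -
  have "(\<Sum>c\<in>partitions (sum_mset mu) (Suc (size mu)). tcoef mu c * tcoef c nu)
      = (\<Sum>c\<in>partitions (sum_mset mu) (Suc (size mu)). mprod geom_coeff mu c * mprod geom_coeff c nu)"
    by (intro sum.cong refl) (simp add: tcoef_eq_mprod[OF mu] tcoef_eq_mprod partitions_def)
  then show ?thesis
    by (simp add: sum_partitions_mprod_geom_coeff[OF mu] tcoef_eq_mprod[OF mu])
qed

section \<open>Chains of partitions\<close>

definition chains :: "nat \<Rightarrow> nat multiset \<Rightarrow> nat \<Rightarrow> nat multiset list set" where
  "chains n mu j = {cs. length cs = j \<and>
     (\<forall>i<j. is_partition (cs ! i) \<and> sum_mset (cs ! i) = n \<and> size (cs ! i) = size mu + (i + 1))}"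

lemma finite_chains: "finite (chains n mu j)"
proof (rule finite_subset)
  show "chains n mu j \<subseteq> {cs. set cs \<subseteq> {c. is_partition c \<and> sum_mset c = n} \<and> length cs = j}"
    by (auto simp: chains_def in_set_conv_nth)
qed (rule finite_lists_length_eq[OF finite_partitions_of_sum])

lemma chains_Suc:
  "chains n mu (Suc j) = (\<lambda>(c, cs). c # cs) ` (SIGMA c:partitions n (Suc (size mu)). chains n c j)"
proof (rule set_eqI)
  fix xs
  show "xs \<in> chains n mu (Suc j) \<longleftrightarrow> xs \<in> (\<lambda>(c, cs). c # cs) ` (SIGMA c:partitions n (Suc (size mu)). chains n c j)"
    by (cases xs) (auto simp: chains_def partitions_def All_less_Suc2)
qed

lemma sum_chains_prod:
  fixes t :: "nat multiset \<Rightarrow> nat multiset \<Rightarrow> 'a::comm_ring_1"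
  assumes step: "\<And>mu. is_partition mu \<Longrightarrow> sum_mset mu = n \<Longrightarrow>
      (\<Sum>c\<in>partitions n (Suc (size mu)). t mu c * t c nu) = (of_nat (size nu) - of_nat (size mu)) * t mu nu"
  shows "is_partition mu \<Longrightarrow> sum_mset mu = n \<Longrightarrow> size nu = size mu + Suc j \<Longrightarrow>
    (\<Sum>cs\<in>chains n mu j. \<Prod>i<Suc j. t ((mu # cs @ [nu]) ! i) ((mu # cs @ [nu]) ! (i + 1)))
      = of_nat (fact (Suc j)) * t mu nu"
proof (induction j arbitrary: mu)
  case 0
  have "chains n mu 0 = {[]}"
    by (auto simp: chains_def)
  then show ?case by simp
next
  case (Suc j)
  let ?P = "partitions n (Suc (size mu))"
  let ?prod = "\<lambda>j mu cs. \<Prod>i<Suc j. t ((mu # cs @ [nu]) ! i) ((mu # cs @ [nu]) ! (i + 1))"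
  have "inj_on (\<lambda>(c, cs). c # cs) (SIGMA c:?P. chains n c j)"
    by (auto simp: inj_on_def)
  then have "(\<Sum>cs\<in>chains n mu (Suc j). ?prod (Suc j) mu cs) = (\<Sum>c\<in>?P. \<Sum>cs\<in>chains n c j. ?prod (Suc j) mu (c # cs))"
    by (simp add: chains_Suc sum.reindex sum.Sigma finite_partitions finite_chains case_prod_unfold)
  also have "\<dots> = (\<Sum>c\<in>?P. t mu c * (\<Sum>cs\<in>chains n c j. ?prod j c cs))"
    by (simp add: prod.lessThan_Suc_shift sum_distrib_left del: prod.lessThan_Suc)
  also have "\<dots> = (\<Sum>c\<in>?P. t mu c * (of_nat (fact (Suc j)) * t c nu))"
    using Suc by (intro sum.cong refl) (simp add: partitions_def)
  also have "\<dots> = of_nat (fact (Suc j)) * (\<Sum>c\<in>?P. t mu c * t c nu)"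
    by (simp add: sum_distrib_left mult.left_commute)
  also have "\<dots> = of_nat (fact (Suc j)) * ((of_nat (size nu) - of_nat (size mu)) * t mu nu)"
    by (simp only: step[OF Suc.prems(1,2)])
  also have "\<dots> = of_nat (fact (Suc j)) * (of_nat (Suc (Suc j)) * t mu nu)"
    using Suc.prems(3) by (simp add: algebra_simps)
  also have "\<dots> = of_nat (fact (Suc (Suc j))) * t mu nu"
    by (simp only: fact_Suc[of "Suc j"] of_nat_mult of_nat_id mult_ac)
  finally show ?case .
qed

theorem lemma6p2:
  fixes mu nu :: "nat multiset" and n k :: nat
  assumes "is_partition mu" and "sum_mset mu = n"
    and "is_partition nu" and "sum_mset nu = n"
    and "size nu = size mu + k" and "k \<ge> 2"
  shows "(\<Sum>cs\<in>{cs. length cs = k - 1 \<and>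
              (\<forall>i<k - 1. is_partition (cs ! i) \<and> sum_mset (cs ! i) = n \<and>
                          size (cs ! i) = size mu + (i + 1))}.
            (\<Prod>i<k. tcoef ((mu # cs @ [nu]) ! i) ((mu # cs @ [nu]) ! (i + 1))))
         = of_nat (fact k) * tcoef mu nu"
proof -
  obtain j where k: "k = Suc j"
    using \<open>k \<ge> 2\<close> by (cases k) auto
  have "{cs. length cs = k - 1 \<and> (\<forall>i<k - 1. is_partition (cs ! i) \<and> sum_mset (cs ! i) = n \<and>
      size (cs ! i) = size mu + (i + 1))} = chains n mu j"
    by (simp add: chains_def k)
  moreover have "(\<Sum>cs\<in>chains n mu j. \<Prod>i<Suc j. tcoef ((mu # cs @ [nu]) ! i) ((mu # cs @ [nu]) ! (i + 1)))
      = of_nat (fact (Suc j)) * tcoef mu nu"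
    using sum_chains_prod[of n tcoef nu mu j] sum_partitions_tcoef assms k by fastforce
  ultimately show ?thesis
    by (simp only: k)
qed

end
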